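(* The elements $\mathsf{F}_{[t]}$, where $t$ runs over the set of unlabeled rooted trees, form a basis of the vector space $H_{\operatorname{NAP}}$.
   Context: $\Pi_{\operatorname{NAP}}(I)$ is the set of forests of rooted trees with vertex set exactly $I$, ordered by: $y$ covers $x$ iff $y$ is obtained from $x$ by adding an edge from the root of one component of $x$ to the root of another component (the latter root remaining the root); $\widehat{0}$ is the forest of one-vertex trees. For a rooted tree $t$ on $I$, $[\widehat{0},t]$ is an interval in $\Pi_{\operatorname{NAP}}(I)$, whose isomorphism class depends only on the unlabeled tree underlying $t$. $H_{\operatorname{NAP}}$ is the incidence Hopf algebra (Schmitt's construction) of this family: it has a basis $\mathsf{F}_{[Q]}$ indexed by isomorphism classes of finite products $Q$ of posets $[\widehat{0},t]$ ($t$ rooted trees), product $\mathsf{F}_{[Q]}\mathsf{F}_{[Q']}=\mathsf{F}_{[Q\times Q']}$, unit the class of the one-element poset, coproduct $\Delta\mathsf{F}_{[Q]}=\sum_{x\in Q}\mathsf{F}_{[\widehat{0},x]}\otimes\mathsf{F}_{[x,\widehat{1}]}$. We write $\mathsf{F}_{[t]}=\mathsf{F}_{[[\widehat{0},t]]}$. *)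

theory Defs
  imports Main HOL.Vector_Spaces "HOL-Library.Function_Algebras"
begin

text \<open>A forest on I is given by its set of edges (child, parent).\<close>
type_synonym forest = "(nat \<times> nat) set"

definition is_forest :: "nat set \<Rightarrow> forest \<Rightarrow> bool" where
  "is_forest I F \<longleftrightarrow> finite I \<and> F \<subseteq> I \<times> I
     \<and> (\<forall>c p q. (c, p) \<in> F \<longrightarrow> (c, q) \<in> F \<longrightarrow> p = q)
     \<and> acyclic F"

definition roots :: "nat set \<Rightarrow> forest \<Rightarrow> nat set" where
  "roots I F = {v \<in> I. \<not> (\<exists>p. (v, p) \<in> F)}"

definition is_rooted_tree :: "nat set \<Rightarrow> forest \<Rightarrow> bool" where
  "is_rooted_tree I F \<longleftrightarrow> is_forest I F \<and> card (roots I F) = 1"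

text \<open>Covering relation of Pi_NAP(I): add an edge from the root r1 of one component
  to the root r2 of another component (distinct roots lie in distinct components);
  r2 remains a root.\<close>
definition nap_cover :: "nat set \<Rightarrow> forest \<Rightarrow> forest \<Rightarrow> bool" where
  "nap_cover I x y \<longleftrightarrow> is_forest I x \<and>
     (\<exists>r1 r2. r1 \<in> roots I x \<and> r2 \<in> roots I x \<and> r1 \<noteq> r2 \<and> y = insert (r1, r2) x)"

definition nap_le :: "nat set \<Rightarrow> forest \<Rightarrow> forest \<Rightarrow> bool" where
  "nap_le I x y \<longleftrightarrow> is_forest I x \<and> is_forest I y \<and> (nap_cover I)\<^sup>*\<^sup>* x y"

type_synonym 'a poset = "'a set \<times> ('a \<Rightarrow> 'a \<Rightarrow> bool)"

text \<open>The interval [0, t] in Pi_NAP(I) (0, the forest of one-vertex trees, is the minimum).\<close>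
definition nap_interval :: "nat set \<Rightarrow> forest \<Rightarrow> forest poset" where
  "nap_interval I t = ({x. nap_le I x t}, nap_le I)"

definition prod_posets :: "'a poset list \<Rightarrow> 'a list poset" where
  "prod_posets Ps =
    ({xs. length xs = length Ps \<and> (\<forall>i<length Ps. xs ! i \<in> fst (Ps ! i))},
     (\<lambda>xs ys. \<forall>i<length Ps. snd (Ps ! i) (xs ! i) (ys ! i)))"

definition poset_iso :: "'a poset \<Rightarrow> 'b poset \<Rightarrow> bool" where
  "poset_iso P Q \<longleftrightarrow> (\<exists>f. bij_betw f (fst P) (fst Q) \<and>
     (\<forall>x\<in>fst P. \<forall>y\<in>fst P. snd P x y \<longleftrightarrow> snd Q (f x) (f y)))"

definition iso_class :: "'a poset \<Rightarrow> 'a poset set" where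
  "iso_class P = {Q. poset_iso P Q}"

text \<open>Finite products of intervals [0,t], t rooted trees (empty product = one-element poset).\<close>
definition nap_products :: "forest list poset set" where
  "nap_products = {prod_posets (map (\<lambda>(I, t). nap_interval I t) ts) | ts.
                     \<forall>(I, t) \<in> set ts. is_rooted_tree I t}"

definition nap_classes :: "forest list poset set set" where
  "nap_classes = iso_class ` nap_products"

definition H_NAP :: "(forest list poset set \<Rightarrow> 'k::field) set" where
  "H_NAP = {f. finite {c. f c \<noteq> 0} \<and> {c. f c \<noteq> 0} \<subseteq> nap_classes}"

definition scaleH :: "'k::field \<Rightarrow> ('c \<Rightarrow> 'k) \<Rightarrow> ('c \<Rightarrow> 'k)" where
  "scaleH a f = (\<lambda>x. a * f x)"

definition Fbasis :: "forest list poset set \<Rightarrow> (forest list poset set \<Rightarrow> 'k::field)" where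
  "Fbasis c = (\<lambda>d. if d = c then 1 else 0)"

definition Ftree :: "nat set \<Rightarrow> forest \<Rightarrow> (forest list poset set \<Rightarrow> 'k::field)" where
  "Ftree I t = Fbasis (iso_class (prod_posets [nap_interval I t]))"

definition tree_iso :: "nat set \<Rightarrow> forest \<Rightarrow> nat set \<Rightarrow> forest \<Rightarrow> bool" where
  "tree_iso I t J s \<longleftrightarrow> (\<exists>f. bij_betw f I J \<and> s = map_prod f f ` t)"

end

theory Submission
  imports Defs
begin

text \<open>An element of \<open>\<Pi>\<^sub>N\<^sub>A\<^sub>P(I)\<close> lies below the tree t iff it is an order ideal of
  the edges of t ordered by descent, so \<open>[0, t]\<close> is the lattice of these edge ideals. Its
  join-irreducible elements are the principal ideals, one for each non-root vertex, and they are
  ordered like the vertices; hence \<open>[0, t]\<close> determines t up to isomorphism, which separates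
  the elements \<open>F\<^sub>[\<^sub>t\<^sub>]\<close>. Conversely, gluing two trees at their roots gives a tree whose
  edge ideals are the pairs of edge ideals of the two trees, so every finite product of intervals
  \<open>[0, t]\<close> is isomorphic to a single one. Thus the \<open>F\<^sub>[\<^sub>t\<^sub>]\<close> are exactly the basis
  vectors \<open>F\<^sub>[\<^sub>Q\<^sub>]\<close> of \<open>H\<^sub>N\<^sub>A\<^sub>P\<close>.\<close>

section \<open>Forests\<close>

lemma is_forest_subset: "is_forest I t \<Longrightarrow> x \<subseteq> t \<Longrightarrow> is_forest I x"
  unfolding is_forest_def by (meson acyclic_subset order_trans subsetD)

lemma is_forest_finite: "is_forest I t \<Longrightarrow> finite t"
  unfolding is_forest_def by (meson finite_SigmaI finite_subset)

lemma is_forest_wf: "is_forest I t \<Longrightarrow> wf t"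
  using is_forest_finite finite_acyclic_wf unfolding is_forest_def by blast

lemma forest_parent_unique: "is_forest I t \<Longrightarrow> (c, p) \<in> t \<Longrightarrow> (c, q) \<in> t \<Longrightarrow> p = q"
  unfolding is_forest_def by blast

lemma forest_trancl_irrefl: "is_forest I t \<Longrightarrow> (a, a) \<notin> t\<^sup>+"
  unfolding is_forest_def acyclic_def by blast

lemma forest_rtrancl_antisym:
  assumes "is_forest I t" "(a, b) \<in> t\<^sup>*" "(b, a) \<in> t\<^sup>*"
  shows "a = b"
proof (rule ccontr)
  assume "a \<noteq> b"
  then have "(a, a) \<in> t\<^sup>+"
    using assms(2,3) by (auto simp: rtrancl_eq_or_trancl)
  then show False
    using forest_trancl_irrefl[OF assms(1)] by blast
qed

lemma forest_parent_rtrancl: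
  assumes "is_forest I t" "(c, p) \<in> t" "(c, w) \<in> t\<^sup>+"
  shows "(p, w) \<in> t\<^sup>*"
  using assms tranclD forest_parent_unique by metis

lemma roots_forest: "is_forest I t \<Longrightarrow> roots I t = I - Domain t"
  unfolding roots_def by auto

lemma Domain_forest_subset: "is_forest I t \<Longrightarrow> Domain t \<subseteq> I"
  unfolding is_forest_def by auto

lemma card_forest_Domain:
  assumes "is_forest I t"
  shows "card t = card (Domain t)"
proof -
  have "inj_on fst t"
    using forest_parent_unique[OF assms] unfolding inj_on_def by auto
  then show ?thesis
    by (simp add: card_image fst_eq_Domain[symmetric])
qed

lemma rooted_tree_rootE:
  assumes "is_rooted_tree I t"
  obtains r where "roots I t = {r}"
  using assms unfolding is_rooted_tree_def by (meson card_1_singletonE)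

lemma rooted_tree_vertices:
  assumes "is_rooted_tree I t" "roots I t = {r}"
  shows "is_forest I t" "I = insert r (Domain t)" "r \<notin> Domain t"
proof -
  show F: "is_forest I t"
    using assms unfolding is_rooted_tree_def by auto
  have "I - Domain t = {r}"
    using roots_forest[OF F] assms(2) by simp
  then show "I = insert r (Domain t)" "r \<notin> Domain t"
    using Domain_forest_subset[OF F] by blast+
qed

section \<open>The intervals \<open>[0, t]\<close> as lattices of edge ideals\<close>

text \<open>Order ideals of the edges of t, where an edge entering a vertex lies below the edge
  leaving it.\<close>
definition edge_ideals :: "forest \<Rightarrow> forest set" where
  "edge_ideals t = {x. x \<subseteq> t \<and> (\<forall>c p g. (c, p) \<in> t \<longrightarrow> (p, g) \<in> x \<longrightarrow> (c, p) \<in> x)}"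

lemma edge_ideals_self: "t \<in> edge_ideals t"
  unfolding edge_ideals_def by auto

lemma nap_chain_new_edges:
  assumes "(nap_cover I)\<^sup>*\<^sup>* x y"
  shows "x \<subseteq> y \<and> (\<forall>c p g. (c, p) \<in> y \<longrightarrow> (c, p) \<notin> x \<longrightarrow> (p, g) \<notin> x)"
  using assms
proof (induction rule: rtranclp_induct)
  case (step y z)
  then obtain r1 r2 where "r1 \<in> roots I y" "r2 \<in> roots I y" "z = insert (r1, r2) y"
    unfolding nap_cover_def by auto
  then show ?case
    using step.IH unfolding roots_def by auto
qed simp

definition edge_below :: "forest \<Rightarrow> ((nat \<times> nat) \<times> (nat \<times> nat)) set" where
  "edge_below t = {(e', e). e' \<in> t \<and> e \<in> t \<and> snd e' = fst e}"

lemma edge_below_trancl: "(e', e) \<in> (edge_below t)\<^sup>+ \<Longrightarrow> (fst e', fst e) \<in> t\<^sup>+"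
proof (induction rule: trancl_induct)
  case (base e)
  then show ?case
    unfolding edge_below_def by (cases e') auto
next
  case (step e e'')
  then show ?case
    unfolding edge_below_def by (cases e) (auto intro: trancl_into_trancl)
qed

lemma wf_edge_below:
  assumes "is_forest I t"
  shows "wf (edge_below t)"
proof (rule finite_acyclic_wf)
  have "edge_below t \<subseteq> t \<times> t"
    unfolding edge_below_def by auto
  then show "finite (edge_below t)"
    using is_forest_finite[OF assms] by (meson finite_SigmaI finite_subset)
  show "acyclic (edge_below t)"
    unfolding acyclic_def
    using edge_below_trancl forest_trancl_irrefl[OF assms] by blast
qed

text \<open>An edge of \<open>y - x\<close> that is minimal for \<open>edge_below\<close> joins two roots of x.\<close>
lemma edge_ideals_cover_step:
  assumes F: "is_forest I t" and x: "x \<in> edge_ideals t" and y: "y \<in> edge_ideals t"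
    and xy: "x \<subset> y"
  obtains e where "e \<in> y - x" "insert e x \<in> edge_ideals t" "nap_cover I x (insert e x)"
proof -
  obtain e where e: "e \<in> y - x" and emin: "\<And>e'. (e', e) \<in> edge_below t \<Longrightarrow> e' \<notin> y - x"
    using wfE_min[OF wf_edge_below[OF F], of _ "y - x"] xy by blast
  obtain c p where cp: "e = (c, p)"
    by (cases e)
  have yt: "y \<subseteq> t" and xt: "x \<subseteq> t"
    using x y unfolding edge_ideals_def by auto
  have cpt: "(c, p) \<in> t"
    using e cp yt by auto
  have children: "(c', c) \<in> x" if "(c', c) \<in> t" for c'
    using that y e cp emin[of "(c', c)"] cpt unfolding edge_ideals_def edge_below_def by auto
  have "insert e x \<in> edge_ideals t"
    unfolding edge_ideals_def
  proof (intro CollectI conjI allI impI)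
    fix c' p' g assume "(c', p') \<in> t" "(p', g) \<in> insert e x"
    then show "(c', p') \<in> insert e x"
      using x children forest_parent_unique[OF F] cpt unfolding edge_ideals_def cp by blast
  qed (use xt cpt cp in auto)
  moreover have "c \<in> roots I x"
    using F cpt e cp xt forest_parent_unique[OF F] unfolding roots_def is_forest_def by blast
  moreover have "p \<in> roots I x"
    using F cpt x e cp unfolding roots_def edge_ideals_def is_forest_def by blast
  moreover have "c \<noteq> p"
    using cpt forest_trancl_irrefl[OF F, of c] by blast
  ultimately show ?thesis
    using that e is_forest_subset[OF F xt] unfolding nap_cover_def cp by blast
qed

lemma nap_chain_if_edge_ideals:
  assumes F: "is_forest I t"
  shows "x \<in> edge_ideals t \<Longrightarrow> y \<in> edge_ideals t \<Longrightarrow> x \<subseteq> y \<Longrightarrow> (nap_cover I)\<^sup>*\<^sup>* x y"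
proof (induction "card (y - x)" arbitrary: x rule: less_induct)
  case less
  show ?case
  proof (cases "x = y")
    case False
    then obtain e where e: "e \<in> y - x" "insert e x \<in> edge_ideals t" "nap_cover I x (insert e x)"
      using edge_ideals_cover_step[OF F less.prems(1,2)] less.prems(3) by blast
    have "finite y"
      using less.prems(2) is_forest_finite[OF F] finite_subset unfolding edge_ideals_def by blast
    then have "card (y - insert e x) < card (y - x)"
      using e(1) by (metis Diff_insert card_Diff1_less finite_Diff)
    then have "(nap_cover I)\<^sup>*\<^sup>* (insert e x) y"
      using less.hyps e less.prems by blast
    then show ?thesis
      using e(3) by (meson converse_rtranclp_into_rtranclp)
  qed simp
qed

lemma nap_le_edge_ideals_iff:
  assumes F: "is_forest I t" and x: "x \<in> edge_ideals t" and y: "y \<in> edge_ideals t"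
  shows "nap_le I x y \<longleftrightarrow> x \<subseteq> y"
proof
  assume "nap_le I x y"
  then show "x \<subseteq> y"
    unfolding nap_le_def using nap_chain_new_edges by blast
next
  assume "x \<subseteq> y"
  moreover have "is_forest I x" "is_forest I y"
    using x y F is_forest_subset unfolding edge_ideals_def by auto
  ultimately show "nap_le I x y"
    unfolding nap_le_def using nap_chain_if_edge_ideals[OF F x y] by blast
qed

lemma nap_interval_edge_ideals:
  assumes F: "is_forest I t"
  shows "nap_interval I t = (edge_ideals t, nap_le I)"
proof -
  have "{x. nap_le I x t} \<subseteq> edge_ideals t"
    using nap_chain_new_edges unfolding nap_le_def edge_ideals_def by blast
  moreover have "edge_ideals t \<subseteq> {x. nap_le I x t}"
    using nap_le_edge_ideals_iff[OF F _ edge_ideals_self] unfolding edge_ideals_def by auto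
  ultimately show ?thesis
    unfolding nap_interval_def by auto
qed

section \<open>Isomorphisms of posets\<close>

lemma poset_iso_refl: "poset_iso P P"
  unfolding poset_iso_def by (rule exI[of _ id]) auto

lemma poset_iso_sym:
  assumes "poset_iso P Q"
  shows "poset_iso Q P"
proof -
  obtain f where f: "bij_betw f (fst P) (fst Q)"
    "\<forall>x\<in>fst P. \<forall>y\<in>fst P. snd P x y \<longleftrightarrow> snd Q (f x) (f y)"
    using assms unfolding poset_iso_def by blast
  let ?g = "inv_into (fst P) f"
  have g: "bij_betw ?g (fst Q) (fst P)"
    using f(1) by (rule bij_betw_inv_into)
  have "snd Q x y \<longleftrightarrow> snd P (?g x) (?g y)" if "x \<in> fst Q" "y \<in> fst Q" for x y
  proof -
    have "?g x \<in> fst P" "?g y \<in> fst P" "f (?g x) = x" "f (?g y) = y"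
      using that f(1) g by (auto simp: bij_betw_def f_inv_into_f inv_into_into)
    then show ?thesis
      using f(2) by metis
  qed
  then show ?thesis
    using g unfolding poset_iso_def by blast
qed

lemma poset_iso_trans [trans]:
  assumes "poset_iso P Q" "poset_iso Q R"
  shows "poset_iso P R"
proof -
  obtain f where f: "bij_betw f (fst P) (fst Q)"
    "\<forall>x\<in>fst P. \<forall>y\<in>fst P. snd P x y \<longleftrightarrow> snd Q (f x) (f y)"
    using assms unfolding poset_iso_def by blast
  obtain g where g: "bij_betw g (fst Q) (fst R)"
    "\<forall>x\<in>fst Q. \<forall>y\<in>fst Q. snd Q x y \<longleftrightarrow> snd R (g x) (g y)"
    using assms unfolding poset_iso_def by blast
  have "snd P x y \<longleftrightarrow> snd R ((g \<circ> f) x) ((g \<circ> f) y)" if "x \<in> fst P" "y \<in> fst P" for x y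
    using that f g by (simp add: bij_betw_apply)
  then show ?thesis
    using bij_betw_trans[OF f(1) g(1)] unfolding poset_iso_def by blast
qed

lemma iso_class_eq_iff: "iso_class P = iso_class Q \<longleftrightarrow> poset_iso P Q"
  unfolding iso_class_def
  using poset_iso_refl poset_iso_sym poset_iso_trans by blast

lemma poset_iso_prod_posets_single: "poset_iso (prod_posets [P]) P"
  unfolding poset_iso_def
proof (intro exI[of _ hd] conjI)
  show "bij_betw hd (fst (prod_posets [P])) (fst P)"
    unfolding prod_posets_def
    by (rule bij_betw_byWitness[of _ "\<lambda>x. [x]"]) (auto simp: length_Suc_conv)
qed (auto simp: prod_posets_def length_Suc_conv)

lemma poset_iso_prod_posets_single_iff:
  "poset_iso (prod_posets [P]) (prod_posets [Q]) \<longleftrightarrow> poset_iso P Q"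
  using poset_iso_prod_posets_single poset_iso_sym poset_iso_trans by meson

definition prod_poset :: "'a poset \<Rightarrow> 'b poset \<Rightarrow> ('a \<times> 'b) poset" where
  "prod_poset P Q = (fst P \<times> fst Q, \<lambda>(a, b) (c, d). snd P a c \<and> snd Q b d)"

lemma poset_iso_prod_posets_Cons:
  "poset_iso (prod_posets (P # Ps)) (prod_poset P (prod_posets Ps))"
  unfolding poset_iso_def
proof (intro exI[of _ "\<lambda>xs. (hd xs, tl xs)"] conjI)
  show "bij_betw (\<lambda>xs. (hd xs, tl xs)) (fst (prod_posets (P # Ps))) (fst (prod_poset P (prod_posets Ps)))"
    unfolding prod_posets_def prod_poset_def
    by (rule bij_betw_byWitness[of _ "\<lambda>(x, xs). x # xs"])
      (auto simp: length_Suc_conv nth_Cons split: nat.splits)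
  show "\<forall>x\<in>fst (prod_posets (P # Ps)). \<forall>y\<in>fst (prod_posets (P # Ps)).
          snd (prod_posets (P # Ps)) x y = snd (prod_poset P (prod_posets Ps)) (hd x, tl x) (hd y, tl y)"
    unfolding prod_posets_def prod_poset_def
    by (auto simp: length_Suc_conv nth_Cons less_Suc_eq_0_disj split: nat.splits)
qed

lemma poset_iso_prod_poset:
  assumes "poset_iso P P'" "poset_iso Q Q'"
  shows "poset_iso (prod_poset P Q) (prod_poset P' Q')"
proof -
  obtain f where f: "bij_betw f (fst P) (fst P')"
    "\<forall>x\<in>fst P. \<forall>y\<in>fst P. snd P x y \<longleftrightarrow> snd P' (f x) (f y)"
    using assms unfolding poset_iso_def by blast
  obtain g where g: "bij_betw g (fst Q) (fst Q')"
    "\<forall>x\<in>fst Q. \<forall>y\<in>fst Q. snd Q x y \<longleftrightarrow> snd Q' (g x) (g y)"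
    using assms unfolding poset_iso_def by blast
  show ?thesis
    unfolding poset_iso_def prod_poset_def using bij_betw_map_prod[OF f(1) g(1)] f(2) g(2)
    by (intro exI[of _ "map_prod f g"]) auto
qed

text \<open>In a finite lattice this is join-irreducibility.\<close>
definition join_irreducible :: "'a set \<Rightarrow> ('a \<Rightarrow> 'a \<Rightarrow> bool) \<Rightarrow> 'a \<Rightarrow> bool" where
  "join_irreducible C le x \<longleftrightarrow>
     x \<in> C \<and> (\<exists>m\<in>C. le m x \<and> m \<noteq> x \<and> (\<forall>y\<in>C. le y x \<and> y \<noteq> x \<longrightarrow> le y m))"

lemma join_irreducible_iso:
  assumes F: "bij_betw F C C'" and mono: "\<forall>x\<in>C. \<forall>y\<in>C. le x y \<longleftrightarrow> le' (F x) (F y)"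
    and x: "x \<in> C"
  shows "join_irreducible C' le' (F x) \<longleftrightarrow> join_irreducible C le x"
proof -
  have F_eq: "F a = F b \<longleftrightarrow> a = b" if "a \<in> C" "b \<in> C" for a b
    using F that unfolding bij_betw_def inj_on_def by blast
  have "F ` C = C'"
    using F unfolding bij_betw_def by blast
  then have strict_below: "(\<exists>m'\<in>C'. P' m') \<longleftrightarrow> (\<exists>m\<in>C. P' (F m))"
    and all_below: "(\<forall>y'\<in>C'. P' y') \<longleftrightarrow> (\<forall>y\<in>C. P' (F y))" for P'
    by blast+
  show ?thesis
    unfolding join_irreducible_def strict_below all_below
    using x mono F_eq bij_betw_apply[OF F x] by (auto 0 4)
qed

section \<open>Recovering a tree from its interval\<close>

lemma poset_iso_nap_interval_iff:
  assumes Ft: "is_forest I t" and Fs: "is_forest J s"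
  shows "poset_iso (nap_interval I t) (nap_interval J s) \<longleftrightarrow>
    (\<exists>F. bij_betw F (edge_ideals t) (edge_ideals s) \<and>
         (\<forall>x\<in>edge_ideals t. \<forall>y\<in>edge_ideals t. x \<subseteq> y \<longleftrightarrow> F x \<subseteq> F y))"
proof -
  have "(\<forall>x\<in>edge_ideals t. \<forall>y\<in>edge_ideals t. nap_le I x y \<longleftrightarrow> nap_le J (F x) (F y)) \<longleftrightarrow>
        (\<forall>x\<in>edge_ideals t. \<forall>y\<in>edge_ideals t. x \<subseteq> y \<longleftrightarrow> F x \<subseteq> F y)"
    if "bij_betw F (edge_ideals t) (edge_ideals s)" for F
    using nap_le_edge_ideals_iff[OF Ft] nap_le_edge_ideals_iff[OF Fs] bij_betw_apply[OF that]
    by simp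
  then show ?thesis
    unfolding poset_iso_def nap_interval_edge_ideals[OF Ft] nap_interval_edge_ideals[OF Fs]
    by (metis fst_conv snd_conv)
qed

definition principal_edge_ideal :: "forest \<Rightarrow> nat \<Rightarrow> forest" where
  "principal_edge_ideal t v = {(c, p) \<in> t. (c, v) \<in> t\<^sup>*}"

lemma principal_edge_ideal_in: "principal_edge_ideal t v \<in> edge_ideals t"
  unfolding edge_ideals_def principal_edge_ideal_def by (auto intro: converse_rtrancl_into_rtrancl)

lemma principal_edge_ideal_least:
  assumes F: "is_forest I t" and y: "y \<in> edge_ideals t" and vg: "(v, g) \<in> y"
  shows "principal_edge_ideal t v \<subseteq> y"
proof -
  have leaves: "\<exists>q. (c, q) \<in> y" if "(c, v) \<in> t\<^sup>*" for c
    using that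
  proof (induction rule: converse_rtrancl_induct)
    case base
    then show ?case
      using vg by blast
  next
    case (step c c')
    then show ?case
      using y unfolding edge_ideals_def by blast
  qed
  have "y \<subseteq> t"
    using y unfolding edge_ideals_def by blast
  then show ?thesis
    using leaves forest_parent_unique[OF F] unfolding principal_edge_ideal_def by blast
qed

lemma principal_edge_ideal_subset_iff:
  assumes "v \<in> Domain t"
  shows "principal_edge_ideal t v \<subseteq> principal_edge_ideal t w \<longleftrightarrow> (v, w) \<in> t\<^sup>*"
proof
  obtain g where "(v, g) \<in> t"
    using assms by blast
  then have "(v, g) \<in> principal_edge_ideal t v"
    unfolding principal_edge_ideal_def by simp
  then show "principal_edge_ideal t v \<subseteq> principal_edge_ideal t w \<Longrightarrow> (v, w) \<in> t\<^sup>*"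
    unfolding principal_edge_ideal_def by blast
qed (auto simp: principal_edge_ideal_def)

lemma principal_edge_ideal_inj:
  assumes F: "is_forest I t" and v: "v \<in> Domain t" and w: "w \<in> Domain t"
    and eq: "principal_edge_ideal t v = principal_edge_ideal t w"
  shows "v = w"
  using principal_edge_ideal_subset_iff[OF v, of w] principal_edge_ideal_subset_iff[OF w, of v]
    forest_rtrancl_antisym[OF F] eq by simp

lemma join_irreducible_edge_ideals_iff:
  assumes F: "is_forest I t"
  shows "join_irreducible (edge_ideals t) (\<subseteq>) x \<longleftrightarrow> (\<exists>v\<in>Domain t. x = principal_edge_ideal t v)"
proof
  assume "join_irreducible (edge_ideals t) (\<subseteq>) x"
  then have x: "x \<in> edge_ideals t"
    unfolding join_irreducible_def by blast
  from \<open>join_irreducible (edge_ideals t) (\<subseteq>) x\<close> obtain m where m: "m \<subseteq> x" "m \<noteq> x"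
    and below_m: "\<forall>y\<in>edge_ideals t. y \<subseteq> x \<and> y \<noteq> x \<longrightarrow> y \<subseteq> m"
    unfolding join_irreducible_def by blast
  obtain c p where cp: "(c, p) \<in> x" "(c, p) \<notin> m"
    using m by auto
  have xt: "x \<subseteq> t"
    using x unfolding edge_ideals_def by blast
  have "(c, p) \<in> principal_edge_ideal t c"
    using cp(1) xt unfolding principal_edge_ideal_def by blast
  then have "\<not> principal_edge_ideal t c \<subseteq> m"
    using cp(2) by blast
  then have "principal_edge_ideal t c = x"
    using below_m principal_edge_ideal_in[of t c] principal_edge_ideal_least[OF F x cp(1)] by blast
  moreover have "c \<in> Domain t"
    using cp(1) xt by blast
  ultimately show "\<exists>v\<in>Domain t. x = principal_edge_ideal t v"
    by blast
next
  assume "\<exists>v\<in>Domain t. x = principal_edge_ideal t v"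
  then obtain v g where x: "x = principal_edge_ideal t v" and vg: "(v, g) \<in> t"
    by blast
  define m where "m = {(c, p) \<in> t. (c, v) \<in> t\<^sup>+}"
  have "(c, p) \<in> m" if "(c, p) \<in> t" "(p, q) \<in> m" for c p q
    using that trancl_into_trancl2[of c p t v] unfolding m_def by blast
  then have m_in: "m \<in> edge_ideals t"
    unfolding edge_ideals_def m_def by blast
  have m_x: "m \<subseteq> x"
    unfolding m_def x principal_edge_ideal_def by auto
  have vg_x: "(v, g) \<in> x" and vg_m: "(v, g) \<notin> m"
    using vg forest_trancl_irrefl[OF F, of v] unfolding x m_def principal_edge_ideal_def by auto
  have "y \<subseteq> m" if y: "y \<in> edge_ideals t" "y \<subseteq> x" "y \<noteq> x" for y
  proof
    fix e assume e: "e \<in> y"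
    obtain c p where cp: "e = (c, p)"
      by (cases e)
    have "c \<noteq> v"
      using principal_edge_ideal_least[OF F y(1), of c p] e y(2,3) unfolding x cp by blast
    moreover have "(c, p) \<in> t" "(c, v) \<in> t\<^sup>*"
      using e y(2) unfolding x cp principal_edge_ideal_def by auto
    ultimately show "e \<in> m"
      unfolding cp m_def by (simp add: rtrancl_eq_or_trancl)
  qed
  then show "join_irreducible (edge_ideals t) (\<subseteq>) x"
    unfolding join_irreducible_def using principal_edge_ideal_in[of t v] m_in m_x vg_x vg_m x
    by blast
qed

context
  fixes I J t s F
  assumes Ft: "is_forest I t" and Fs: "is_forest J s"
    and F: "bij_betw F (edge_ideals t) (edge_ideals s)"
    and mono: "\<forall>x\<in>edge_ideals t. \<forall>y\<in>edge_ideals t. x \<subseteq> y \<longleftrightarrow> F x \<subseteq> F y"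
begin

private lemma join_irreducible_image:
  "x \<in> edge_ideals t \<Longrightarrow>
     join_irreducible (edge_ideals s) (\<subseteq>) (F x) \<longleftrightarrow> join_irreducible (edge_ideals t) (\<subseteq>) x"
  using join_irreducible_iso[OF F mono] .

private lemma principal_edge_ideal_image:
  assumes "v \<in> Domain t"
  shows "\<exists>w\<in>Domain s. F (principal_edge_ideal t v) = principal_edge_ideal s w"
proof -
  have "join_irreducible (edge_ideals t) (\<subseteq>) (principal_edge_ideal t v)"
    using join_irreducible_edge_ideals_iff[OF Ft] assms by blast
  then show ?thesis
    using join_irreducible_image[OF principal_edge_ideal_in] join_irreducible_edge_ideals_iff[OF Fs]
    by blast
qed

private lemma principal_edge_ideal_preimage:
  assumes w: "w \<in> Domain s"
  shows "\<exists>v\<in>Domain t. F (principal_edge_ideal t v) = principal_edge_ideal s w"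
proof -
  obtain x where x: "x \<in> edge_ideals t" "principal_edge_ideal s w = F x"
    using F principal_edge_ideal_in[of s w] unfolding bij_betw_def by blast
  have "join_irreducible (edge_ideals s) (\<subseteq>) (F x)"
    using join_irreducible_edge_ideals_iff[OF Fs] w x(2) by blast
  then have "join_irreducible (edge_ideals t) (\<subseteq>) x"
    using join_irreducible_image[OF x(1)] by blast
  then show ?thesis
    unfolding join_irreducible_edge_ideals_iff[OF Ft] using x(2) by blast
qed

lemma edge_ideals_iso_vertex_bij:
  obtains h where "bij_betw h (Domain t) (Domain s)"
    "\<And>v w. v \<in> Domain t \<Longrightarrow> w \<in> Domain t \<Longrightarrow> (v, w) \<in> t\<^sup>* \<longleftrightarrow> (h v, h w) \<in> s\<^sup>*"
proof -
  let ?P = principal_edge_ideal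
  obtain h where h_in: "\<And>v. v \<in> Domain t \<Longrightarrow> h v \<in> Domain s"
    and h: "\<And>v. v \<in> Domain t \<Longrightarrow> F (?P t v) = ?P s (h v)"
    using principal_edge_ideal_image by (metis bchoice)
  have F_inj: "inj_on F (edge_ideals t)"
    using F unfolding bij_betw_def by blast
  have "inj_on h (Domain t)"
  proof (rule inj_onI)
    fix v w assume vw: "v \<in> Domain t" "w \<in> Domain t" "h v = h w"
    then have "F (?P t v) = F (?P t w)"
      using h by simp
    then have "?P t v = ?P t w"
      using inj_onD[OF F_inj] principal_edge_ideal_in by blast
    then show "v = w"
      using principal_edge_ideal_inj[OF Ft vw(1,2)] by blast
  qed
  moreover have "Domain s \<subseteq> h ` Domain t"
  proof
    fix w assume w: "w \<in> Domain s"
    then obtain v where v: "v \<in> Domain t" "F (?P t v) = ?P s w"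
      using principal_edge_ideal_preimage by blast
    then have "w = h v"
      using principal_edge_ideal_inj[OF Fs w h_in[OF v(1)]] h by simp
    then show "w \<in> h ` Domain t"
      using v by blast
  qed
  ultimately have "bij_betw h (Domain t) (Domain s)"
    unfolding bij_betw_def using h_in by blast
  moreover have "(v, w) \<in> t\<^sup>* \<longleftrightarrow> (h v, h w) \<in> s\<^sup>*" if "v \<in> Domain t" "w \<in> Domain t" for v w
  proof -
    have "(v, w) \<in> t\<^sup>* \<longleftrightarrow> ?P t v \<subseteq> ?P t w"
      using principal_edge_ideal_subset_iff[OF that(1)] by simp
    also have "\<dots> \<longleftrightarrow> F (?P t v) \<subseteq> F (?P t w)"
      using mono principal_edge_ideal_in[of t v] principal_edge_ideal_in[of t w] by simp
    also have "\<dots> \<longleftrightarrow> (h v, h w) \<in> s\<^sup>*"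
      using principal_edge_ideal_subset_iff[OF h_in[OF that(1)]] h that by simp
    finally show ?thesis .
  qed
  ultimately show ?thesis
    using that by blast
qed

end

lemma rtrancl_from_sink: "a \<notin> Domain r \<Longrightarrow> (a, b) \<in> r\<^sup>* \<Longrightarrow> a = b"
  by (auto elim: converse_rtranclE)

text \<open>A forest is determined by the descendant order on its non-root vertices: the parent
  of c is the least vertex strictly above it, or a root if there is none.\<close>
context
  fixes I J t s h
  assumes Ft: "is_forest I t" and Fs: "is_forest J s"
    and h: "bij_betw h (Domain t) (Domain s)"
    and h_reach: "\<And>v w. v \<in> Domain t \<Longrightarrow> w \<in> Domain t \<Longrightarrow> (v, w) \<in> t\<^sup>* \<longleftrightarrow> (h v, h w) \<in> s\<^sup>*"
begin

private lemma h_reach_strict: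
  assumes "v \<in> Domain t" "w \<in> Domain t"
  shows "(v, w) \<in> t\<^sup>+ \<longleftrightarrow> (h v, h w) \<in> s\<^sup>+"
  using h_reach[OF assms] inj_on_eq_iff[OF bij_betw_imp_inj_on[OF h] assms]
    forest_trancl_irrefl[OF Ft] forest_trancl_irrefl[OF Fs] by (auto simp: rtrancl_eq_or_trancl)

lemma descendant_iso_parent_in_Domain:
  assumes cp: "(c, p) \<in> t" and q: "(h c, q) \<in> s" and "q \<in> Domain s"
  shows "p \<in> Domain t \<and> q = h p"
proof -
  have c: "c \<in> Domain t"
    using cp by blast
  obtain w where w: "w \<in> Domain t" "q = h w"
    using h \<open>q \<in> Domain s\<close> unfolding bij_betw_def by blast
  then have "(c, w) \<in> t\<^sup>+"
    using h_reach_strict[OF c w(1)] q by blast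
  then have pw: "(p, w) \<in> t\<^sup>*"
    using forest_parent_rtrancl[OF Ft cp] by blast
  have p: "p \<in> Domain t"
    using rtrancl_from_sink[of p t w] pw w(1) by blast
  then have "(h c, h p) \<in> s\<^sup>+"
    using h_reach_strict[OF c p] cp by blast
  then have "(h w, h p) \<in> s\<^sup>*"
    using forest_parent_rtrancl[OF Fs q] w(2) by blast
  then have "w = p"
    using h_reach[OF w(1) p] forest_rtrancl_antisym[OF Ft _ pw] by blast
  then show ?thesis
    using p w(2) by blast
qed

lemma descendant_iso_parent_not_in_Domain:
  assumes cp: "(c, p) \<in> t" and q: "(h c, q) \<in> s" and "q \<notin> Domain s"
  shows "p \<notin> Domain t"
proof
  assume p: "p \<in> Domain t"
  have "c \<in> Domain t"
    using cp by blast
  then have "(h c, h p) \<in> s\<^sup>+"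
    using h_reach_strict[OF _ p] cp by blast
  then have "q = h p"
    using forest_parent_rtrancl[OF Fs q] rtrancl_from_sink[OF \<open>q \<notin> Domain s\<close>] by blast
  moreover have "h p \<in> Domain s"
    using h p by (rule bij_betw_apply)
  ultimately show False
    using \<open>q \<notin> Domain s\<close> by blast
qed

end

lemma tree_iso_if_descendant_iso:
  assumes T: "is_rooted_tree I t" and S: "is_rooted_tree J s"
    and h: "bij_betw h (Domain t) (Domain s)"
    and h_reach: "\<And>v w. v \<in> Domain t \<Longrightarrow> w \<in> Domain t \<Longrightarrow> (v, w) \<in> t\<^sup>* \<longleftrightarrow> (h v, h w) \<in> s\<^sup>*"
  shows "tree_iso I t J s"
proof -
  obtain rt rs where rt: "roots I t = {rt}" and rs: "roots J s = {rs}"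
    using T S by (meson rooted_tree_rootE)
  note tv = rooted_tree_vertices[OF T rt] and sv = rooted_tree_vertices[OF S rs]
  have Ft: "is_forest I t" and Fs: "is_forest J s"
    using tv sv by blast+
  define f where "f v = (if v \<in> Domain t then h v else rs)" for v
  have f_bij: "bij_betw f I J"
  proof -
    have "bij_betw f (Domain t) (Domain s)"
      using h by (rule bij_betw_cong[THEN iffD1, rotated]) (simp add: f_def)
    then have "bij_betw f (Domain t \<union> {rt}) (Domain s \<union> {f rt})"
      using tv(3) sv(3) by (intro notIn_Un_bij_betw) (simp_all add: f_def)
    then show ?thesis
      using tv(2,3) sv(2) by (simp add: f_def)
  qed
  have "(f c, f p) \<in> s" if cp: "(c, p) \<in> t" for c p
  proof -
    obtain q where q: "(h c, q) \<in> s"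
      using h cp unfolding bij_betw_def by blast
    have "q \<in> J"
      using q Fs unfolding is_forest_def by blast
    then have "q = f p"
      using descendant_iso_parent_in_Domain[OF Ft Fs h h_reach cp q]
        descendant_iso_parent_not_in_Domain[OF Ft Fs h h_reach cp q] sv(2)
      unfolding f_def by auto
    moreover have "f c = h c"
      using cp by (auto simp: f_def)
    ultimately show ?thesis
      using q by simp
  qed
  then have sub: "map_prod f f ` t \<subseteq> s"
    by auto
  have "inj_on (map_prod f f) t"
    using map_prod_inj_on[OF bij_betw_imp_inj_on[OF f_bij] bij_betw_imp_inj_on[OF f_bij]]
      Ft inj_on_subset unfolding is_forest_def by blast
  then have "card (map_prod f f ` t) = card s"
    using card_image card_forest_Domain[OF Ft] card_forest_Domain[OF Fs] bij_betw_same_card[OF h]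
    by metis
  then have "map_prod f f ` t = s"
    using sub is_forest_finite[OF Fs] by (simp add: card_subset_eq)
  then show ?thesis
    unfolding tree_iso_def using f_bij by blast
qed

section \<open>Relabelling and gluing trees\<close>

lemma Domain_map_prod_image: "Domain (map_prod f f ` t) = f ` Domain t"
  by force

lemma is_forest_relabel:
  assumes F: "is_forest I t" and inj: "inj_on f I"
  shows "is_forest (f ` I) (map_prod f f ` t)"
proof -
  have tI: "t \<subseteq> I \<times> I"
    using F unfolding is_forest_def by blast
  have "wf (map_prod f f ` t)"
    using is_forest_wf[OF F]
    by (rule wf_map_prod_image_Dom_Ran) (use inj tI in \<open>auto dest: inj_onD\<close>)
  moreover have "p = q" if cp: "(c, p) \<in> map_prod f f ` t" and cq: "(c, q) \<in> map_prod f f ` t"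
    for c p q
  proof -
    obtain c1 p1 where 1: "(c1, p1) \<in> t" "c = f c1" "p = f p1"
      using cp by auto
    obtain c2 q2 where 2: "(c2, q2) \<in> t" "c = f c2" "q = f q2"
      using cq by auto
    have "c1 = c2"
      using 1 2 tI inj_onD[OF inj] by blast
    then show ?thesis
      using 1 2 forest_parent_unique[OF F] by blast
  qed
  ultimately show ?thesis
    using F tI unfolding is_forest_def by (auto intro: wf_acyclic)
qed

lemma roots_relabel:
  assumes F: "is_forest I t" and inj: "inj_on f I"
  shows "roots (f ` I) (map_prod f f ` t) = f ` roots I t"
proof -
  have "roots (f ` I) (map_prod f f ` t) = f ` I - f ` Domain t"
    using roots_forest[OF is_forest_relabel[OF F inj]] by (simp add: Domain_map_prod_image)
  also have "\<dots> = f ` (I - Domain t)"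
    using inj_on_image_set_diff[OF inj _ Domain_forest_subset[OF F]] by simp
  finally show ?thesis
    using roots_forest[OF F] by simp
qed

lemma is_rooted_tree_relabel:
  assumes T: "is_rooted_tree I t" and inj: "inj_on f I"
  shows "is_rooted_tree (f ` I) (map_prod f f ` t)"
proof -
  have F: "is_forest I t"
    using T unfolding is_rooted_tree_def by blast
  have "roots I t \<subseteq> I"
    unfolding roots_def by blast
  then have "inj_on f (roots I t)"
    using inj inj_on_subset by blast
  then have "card (roots (f ` I) (map_prod f f ` t)) = card (roots I t)"
    unfolding roots_relabel[OF F inj] by (rule card_image)
  then show ?thesis
    using T is_forest_relabel[OF F inj] unfolding is_rooted_tree_def by simp
qed

lemma subset_image_vimage_eq: "B \<subseteq> f ` A \<Longrightarrow> f ` (A \<inter> f -` B) = B"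
  by auto

lemma inj_on_image_subset_iff:
  assumes "inj_on f C" "A \<subseteq> C" "B \<subseteq> C"
  shows "f ` A \<subseteq> f ` B \<longleftrightarrow> A \<subseteq> B"
  using assms inj_on_image_mem_iff[OF assms(1) _ assms(3)] by blast

lemma poset_iso_nap_interval_relabel:
  assumes F: "is_forest I t" and inj: "inj_on f I"
  shows "poset_iso (nap_interval I t) (nap_interval (f ` I) (map_prod f f ` t))"
proof -
  let ?m = "map_prod f f"
  have tI: "t \<subseteq> I \<times> I"
    using F unfolding is_forest_def by blast
  have inj_m: "inj_on ?m t"
    using map_prod_inj_on[OF inj inj] tI inj_on_subset by blast
  have ideals_t: "edge_ideals t \<subseteq> Pow t"
    unfolding edge_ideals_def by blast
  have "?m ` x \<in> edge_ideals (?m ` t)" if x: "x \<in> edge_ideals t" for x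
    unfolding edge_ideals_def
  proof (intro CollectI conjI allI impI)
    show "?m ` x \<subseteq> ?m ` t"
      using x unfolding edge_ideals_def by blast
    fix c' p' g' assume "(c', p') \<in> ?m ` t" "(p', g') \<in> ?m ` x"
    then obtain c p p1 g where cp: "(c, p) \<in> t" "c' = f c" "p' = f p"
      and pg: "(p1, g) \<in> x" "p' = f p1"
      by auto
    have "p1 = p"
      using cp pg x tI inj_onD[OF inj] unfolding edge_ideals_def by blast
    then have "(c, p) \<in> x"
      using cp pg x unfolding edge_ideals_def by blast
    then show "(c', p') \<in> ?m ` x"
      using cp by (simp add: rev_image_eqI)
  qed
  moreover have "y \<in> (`) ?m ` edge_ideals t" if y: "y \<in> edge_ideals (?m ` t)" for y
  proof -
    let ?x = "t \<inter> ?m -` y"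
    have "?x \<in> edge_ideals t"
      using y unfolding edge_ideals_def by auto
    moreover have "y \<subseteq> ?m ` t"
      using y unfolding edge_ideals_def by blast
    then have "y = ?m ` ?x"
      by (rule subset_image_vimage_eq[symmetric])
    ultimately show ?thesis
      by blast
  qed
  ultimately have "bij_betw ((`) ?m) (edge_ideals t) (edge_ideals (?m ` t))"
    unfolding bij_betw_def using inj_on_subset[OF inj_on_image_Pow[OF inj_m] ideals_t] by blast
  moreover have "x \<subseteq> y \<longleftrightarrow> ?m ` x \<subseteq> ?m ` y" if "x \<in> edge_ideals t" "y \<in> edge_ideals t" for x y
    using inj_on_image_subset_iff[OF inj_m] that ideals_t by blast
  ultimately show ?thesis
    unfolding poset_iso_nap_interval_iff[OF F is_forest_relabel[OF F inj]]
    by (intro exI[of _ "image ?m"]) blast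
qed

lemma tree_iso_iff_poset_iso_nap_interval:
  assumes T: "is_rooted_tree I t" and S: "is_rooted_tree J s"
  shows "tree_iso I t J s \<longleftrightarrow> poset_iso (nap_interval I t) (nap_interval J s)"
proof
  assume "tree_iso I t J s"
  then obtain f where "bij_betw f I J" "s = map_prod f f ` t"
    unfolding tree_iso_def by blast
  then show "poset_iso (nap_interval I t) (nap_interval J s)"
    using poset_iso_nap_interval_relabel T unfolding is_rooted_tree_def bij_betw_def by blast
next
  have Ft: "is_forest I t" and Fs: "is_forest J s"
    using T S unfolding is_rooted_tree_def by blast+
  assume "poset_iso (nap_interval I t) (nap_interval J s)"
  then obtain F where "bij_betw F (edge_ideals t) (edge_ideals s)"
    "\<forall>x\<in>edge_ideals t. \<forall>y\<in>edge_ideals t. x \<subseteq> y \<longleftrightarrow> F x \<subseteq> F y"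
    using poset_iso_nap_interval_iff[OF Ft Fs] by blast
  then obtain h where "bij_betw h (Domain t) (Domain s)"
    "\<And>v w. v \<in> Domain t \<Longrightarrow> w \<in> Domain t \<Longrightarrow> (v, w) \<in> t\<^sup>* \<longleftrightarrow> (h v, h w) \<in> s\<^sup>*"
    using edge_ideals_iso_vertex_bij[OF Ft Fs] by blast
  then show "tree_iso I t J s"
    using tree_iso_if_descendant_iso[OF T S] by blast
qed

context
  fixes I1 I2 t1 t2 r
  assumes T1: "is_rooted_tree I1 t1" and T2: "is_rooted_tree I2 t2"
    and r1: "roots I1 t1 = {r}" and r2: "roots I2 t2 = {r}" and common: "I1 \<inter> I2 = {r}"
begin

private lemma forests: "is_forest I1 t1" "is_forest I2 t2"
  using T1 T2 unfolding is_rooted_tree_def by blast+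

private lemma edges_within: "t1 \<subseteq> I1 \<times> I1" "t2 \<subseteq> I2 \<times> I2"
  using forests unfolding is_forest_def by blast+

private lemma Domain_disjoint: "Domain t1 \<inter> I2 = {}" "Domain t2 \<inter> I1 = {}"
  using rooted_tree_vertices[OF T1 r1] rooted_tree_vertices[OF T2 r2] common by auto

lemma is_rooted_tree_Un: "is_rooted_tree (I1 \<union> I2) (t1 \<union> t2)"
proof -
  have "wf (t1 \<union> t2)"
    using wf_Un[OF is_forest_wf[OF forests(1)] is_forest_wf[OF forests(2)]] Domain_disjoint(1)
      edges_within(2) by blast
  moreover have "p = q" if "(c, p) \<in> t1 \<union> t2" "(c, q) \<in> t1 \<union> t2" for c p q
    using that forest_parent_unique[OF forests(1)] forest_parent_unique[OF forests(2)]
      Domain_disjoint edges_within by blast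
  ultimately have F: "is_forest (I1 \<union> I2) (t1 \<union> t2)"
    using forests edges_within unfolding is_forest_def by (auto intro: wf_acyclic)
  have "roots (I1 \<union> I2) (t1 \<union> t2) = {r}"
    using rooted_tree_vertices[OF T1 r1] rooted_tree_vertices[OF T2 r2] common
    unfolding roots_forest[OF F] by blast
  then show ?thesis
    using F unfolding is_rooted_tree_def by simp
qed

private lemma edge_ideals_Un_split:
  assumes "x \<in> edge_ideals (t1 \<union> t2)"
  shows "x \<inter> t1 \<in> edge_ideals t1" "x \<inter> t2 \<in> edge_ideals t2"
  using assms unfolding edge_ideals_def by blast+

private lemma edge_ideals_Un_join:
  assumes a: "a \<in> edge_ideals t1" and b: "b \<in> edge_ideals t2"
  shows "a \<union> b \<in> edge_ideals (t1 \<union> t2)"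
  unfolding edge_ideals_def
proof (intro CollectI conjI allI impI)
  show "a \<union> b \<subseteq> t1 \<union> t2"
    using a b unfolding edge_ideals_def by blast
  fix c p g assume cp: "(c, p) \<in> t1 \<union> t2" and pg: "(p, g) \<in> a \<union> b"
  have "a \<subseteq> t1" "b \<subseteq> t2"
    using a b unfolding edge_ideals_def by blast+
  then have "(c, p) \<in> t1 \<and> (p, g) \<in> a \<or> (c, p) \<in> t2 \<and> (p, g) \<in> b"
    using cp pg Domain_disjoint edges_within by blast
  then show "(c, p) \<in> a \<union> b"
    using a b unfolding edge_ideals_def by blast
qed

lemma poset_iso_nap_interval_Un:
  "poset_iso (prod_poset (nap_interval I1 t1) (nap_interval I2 t2))
     (nap_interval (I1 \<union> I2) (t1 \<union> t2))"
proof -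
  have F: "is_forest (I1 \<union> I2) (t1 \<union> t2)"
    using is_rooted_tree_Un unfolding is_rooted_tree_def by blast
  have disjoint: "t1 \<inter> t2 = {}"
    using Domain_disjoint edges_within by blast
  have ideals: "edge_ideals t1 \<subseteq> Pow t1" "edge_ideals t2 \<subseteq> Pow t2"
    unfolding edge_ideals_def by blast+
  have split_join: "((a \<union> b) \<inter> t1, (a \<union> b) \<inter> t2) = (a, b)"
    if "a \<in> edge_ideals t1" "b \<in> edge_ideals t2" for a b
    using that ideals disjoint by blast
  have join_split: "(x \<inter> t1) \<union> (x \<inter> t2) = x" if "x \<in> edge_ideals (t1 \<union> t2)" for x
    using that unfolding edge_ideals_def by blast
  have bij: "bij_betw (\<lambda>(a, b). a \<union> b) (edge_ideals t1 \<times> edge_ideals t2) (edge_ideals (t1 \<union> t2))"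
    by (rule bij_betw_byWitness[of _ "\<lambda>x. (x \<inter> t1, x \<inter> t2)"])
      (use split_join join_split edge_ideals_Un_split edge_ideals_Un_join in auto)
  have mono: "a \<subseteq> a' \<and> b \<subseteq> b' \<longleftrightarrow> a \<union> b \<subseteq> a' \<union> b'"
    if "a \<in> edge_ideals t1" "b \<in> edge_ideals t2" "a' \<in> edge_ideals t1" "b' \<in> edge_ideals t2"
    for a b a' b'
    using that ideals disjoint by blast
  show ?thesis
    unfolding poset_iso_def prod_poset_def nap_interval_edge_ideals[OF forests(1)]
      nap_interval_edge_ideals[OF forests(2)] nap_interval_edge_ideals[OF F]
    using bij mono nap_le_edge_ideals_iff[OF forests(1)] nap_le_edge_ideals_iff[OF forests(2)]
      nap_le_edge_ideals_iff[OF F] edge_ideals_Un_join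
    by (intro exI[of _ "\<lambda>(a, b). a \<union> b"]) auto
qed

end

lemma is_rooted_tree_single_vertex: "is_rooted_tree {0} {}"
  unfolding is_rooted_tree_def is_forest_def roots_def acyclic_def by auto

lemma poset_iso_prod_posets_Nil: "poset_iso (prod_posets []) (nap_interval {0} {})"
proof -
  have "is_forest {0} {}"
    using is_rooted_tree_single_vertex unfolding is_rooted_tree_def by blast
  moreover have "edge_ideals {} = {{}}"
    unfolding edge_ideals_def by auto
  ultimately have interval: "nap_interval {0} {} = ({{}}, nap_le {0})" and le: "nap_le {0} {} {}"
    using nap_interval_edge_ideals nap_le_edge_ideals_iff by auto
  have unit: "prod_posets [] = ({[]}, \<lambda>xs ys. True)"
    unfolding prod_posets_def by auto
  show ?thesis
    unfolding poset_iso_def interval unit using le by (intro exI[of _ "\<lambda>_. {}"]) (auto simp: bij_betw_def)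
qed

lemma glue_rooted_trees:
  assumes T1: "is_rooted_tree I1 t1" and T2: "is_rooted_tree I2 t2"
  obtains I t where "is_rooted_tree I t"
    "poset_iso (prod_poset (nap_interval I1 t1) (nap_interval I2 t2)) (nap_interval I t)"
proof -
  obtain r1 r2 where r1: "roots I1 t1 = {r1}" and r2: "roots I2 t2 = {r2}"
    using T1 T2 by (meson rooted_tree_rootE)
  define f1 where "f1 v = (if v = r1 then 0 else 2 * v + 1)" for v :: nat
  define f2 where "f2 v = (if v = r2 then 0 else 2 * v + 2)" for v :: nat
  have inj: "inj_on f1 I1" "inj_on f2 I2"
    unfolding f1_def f2_def inj_on_def by auto
  have F1: "is_forest I1 t1" and F2: "is_forest I2 t2"
    using T1 T2 unfolding is_rooted_tree_def by blast+
  have "r1 \<in> I1" "r2 \<in> I2"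
    using r1 r2 unfolding roots_def by blast+
  then have common: "f1 ` I1 \<inter> f2 ` I2 = {0}"
    unfolding f1_def f2_def by (auto split: if_splits) presburger+
  have roots: "roots (f1 ` I1) (map_prod f1 f1 ` t1) = {0}" "roots (f2 ` I2) (map_prod f2 f2 ` t2) = {0}"
    using roots_relabel[OF F1 inj(1)] roots_relabel[OF F2 inj(2)] r1 r2 by (simp_all add: f1_def f2_def)
  note glued = is_rooted_tree_relabel[OF T1 inj(1)] is_rooted_tree_relabel[OF T2 inj(2)] roots common
  have "poset_iso (prod_poset (nap_interval I1 t1) (nap_interval I2 t2))
      (prod_poset (nap_interval (f1 ` I1) (map_prod f1 f1 ` t1)) (nap_interval (f2 ` I2) (map_prod f2 f2 ` t2)))"
    using poset_iso_prod_poset[OF poset_iso_nap_interval_relabel[OF F1 inj(1)]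
        poset_iso_nap_interval_relabel[OF F2 inj(2)]] .
  also have "poset_iso \<dots> (nap_interval (f1 ` I1 \<union> f2 ` I2) (map_prod f1 f1 ` t1 \<union> map_prod f2 f2 ` t2))"
    using poset_iso_nap_interval_Un[OF glued] .
  finally show ?thesis
    using that is_rooted_tree_Un[OF glued] by blast
qed

lemma prod_posets_nap_interval_iso_tree:
  assumes "\<forall>(I, t) \<in> set ts. is_rooted_tree I t"
  shows "\<exists>I t. is_rooted_tree I t \<and>
    poset_iso (prod_posets (map (\<lambda>(I, t). nap_interval I t) ts)) (nap_interval I t)"
  using assms
proof (induction ts)
  case Nil
  then show ?case
    using is_rooted_tree_single_vertex poset_iso_prod_posets_Nil by auto
next
  case (Cons It ts)
  obtain I1 t1 where It: "It = (I1, t1)" and T1: "is_rooted_tree I1 t1"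
    using Cons.prems by (cases It) auto
  have "\<forall>(I, t) \<in> set ts. is_rooted_tree I t"
    using Cons.prems by simp
  then obtain I2 t2 where T2: "is_rooted_tree I2 t2"
    and iso2: "poset_iso (prod_posets (map (\<lambda>(I, t). nap_interval I t) ts)) (nap_interval I2 t2)"
    using Cons.IH by blast
  obtain I t where T: "is_rooted_tree I t"
    and glued: "poset_iso (prod_poset (nap_interval I1 t1) (nap_interval I2 t2)) (nap_interval I t)"
    using glue_rooted_trees[OF T1 T2] .
  have "poset_iso (prod_posets (map (\<lambda>(I, t). nap_interval I t) (It # ts)))
      (prod_poset (nap_interval I1 t1) (nap_interval I2 t2))"
    using poset_iso_trans[OF poset_iso_prod_posets_Cons poset_iso_prod_poset[OF poset_iso_refl iso2]]
    by (simp add: It)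
  then show ?case
    using T poset_iso_trans[OF _ glued] by blast
qed

section \<open>The basis of \<open>H\<^sub>N\<^sub>A\<^sub>P\<close>\<close>

lemma module_scaleH: "module (scaleH :: 'k::field \<Rightarrow> ('c \<Rightarrow> 'k) \<Rightarrow> 'c \<Rightarrow> 'k)"
  by unfold_locales (auto simp: scaleH_def algebra_simps)

lemma sum_fun_apply: "sum f A x = (\<Sum>a\<in>A. f a x)"
  by (induction A rule: infinite_finite_induct) auto

lemma Fbasis_eq_iff: "(Fbasis c :: _ \<Rightarrow> 'k::field) = Fbasis d \<longleftrightarrow> c = d"
  unfolding Fbasis_def by (metis zero_neq_one)

lemma sum_scaleH_Fbasis_apply:
  assumes "finite C"
  shows "(\<Sum>c\<in>C. scaleH (a c) (Fbasis c)) d = (if d \<in> C then a d else (0 :: 'k::field))"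
  using assms by (simp add: sum_fun_apply scaleH_def Fbasis_def if_distrib[of "\<lambda>x. _ * x"] cong: if_cong)

lemma independent_Fbasis: "\<not> module.dependent scaleH (Fbasis ` C :: (_ \<Rightarrow> 'k::field) set)"
proof
  interpret m: module "scaleH :: 'k \<Rightarrow> (forest list poset set \<Rightarrow> 'k) \<Rightarrow> _"
    by (rule module_scaleH)
  assume "m.dependent (Fbasis ` C)"
  then obtain T :: "(_ \<Rightarrow> 'k) set" and u v
    where T: "finite T" "T \<subseteq> Fbasis ` C" "(\<Sum>w\<in>T. scaleH (u w) w) = 0"
    and v: "v \<in> T" "u v \<noteq> 0"
    unfolding m.dependent_explicit by blast
  obtain c where c: "v = Fbasis c"
    using v T(2) by blast
  have "scaleH (u w) w c = (if w = v then u w else 0)" if w: "w \<in> T" for w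
  proof -
    obtain d where "w = Fbasis d"
      using w T(2) by blast
    then show ?thesis
      using Fbasis_eq_iff[of d c] by (auto simp: c Fbasis_def scaleH_def)
  qed
  then have "(\<Sum>w\<in>T. scaleH (u w) w) c = (\<Sum>w\<in>T. if w = v then u w else 0)"
    unfolding sum_fun_apply by (rule sum.cong[OF refl])
  also have "\<dots> = u v"
    using T(1) v(1) by simp
  finally show False
    using T(3) v(2) by simp
qed

lemma span_Fbasis:
  "module.span scaleH (Fbasis ` C :: (_ \<Rightarrow> 'k::field) set) =
     {f. finite {c. f c \<noteq> 0} \<and> {c. f c \<noteq> 0} \<subseteq> C}" (is "_ = ?H")
proof
  interpret m: module "scaleH :: 'k \<Rightarrow> (forest list poset set \<Rightarrow> 'k) \<Rightarrow> _"
    by (rule module_scaleH)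
  have "m.subspace ?H"
  proof (rule m.subspaceI)
    fix f g :: "_ \<Rightarrow> 'k" and a :: 'k assume "f \<in> ?H" "g \<in> ?H"
    moreover have "{c. (f + g) c \<noteq> 0} \<subseteq> {c. f c \<noteq> 0} \<union> {c. g c \<noteq> 0}"
      and "{c. scaleH a f c \<noteq> 0} \<subseteq> {c. f c \<noteq> 0}"
      by (auto simp: scaleH_def)
    ultimately show "f + g \<in> ?H" "scaleH a f \<in> ?H"
      by (auto intro: finite_subset)
  qed simp
  moreover have "Fbasis ` C \<subseteq> ?H"
    by (auto simp: Fbasis_def split: if_splits)
  ultimately show "m.span (Fbasis ` C) \<subseteq> ?H"
    by (rule m.span_minimal[rotated])
  show "?H \<subseteq> m.span (Fbasis ` C)"
  proof
    fix f :: "_ \<Rightarrow> 'k" assume f: "f \<in> ?H"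
    let ?S = "{c. f c \<noteq> 0}"
    have "f = (\<Sum>c\<in>?S. scaleH (f c) (Fbasis c))"
      using f by (auto simp: sum_scaleH_Fbasis_apply)
    also have "\<dots> \<in> m.span (Fbasis ` C)"
      using f by (intro m.span_sum m.span_scale m.span_base) auto
    finally show "f \<in> m.span (Fbasis ` C)" .
  qed
qed

lemma Ftree_eq_iff_tree_iso:
  assumes "is_rooted_tree I t" "is_rooted_tree J s"
  shows "(Ftree I t :: _ \<Rightarrow> 'k::field) = Ftree J s \<longleftrightarrow> tree_iso I t J s"
  unfolding Ftree_def Fbasis_eq_iff iso_class_eq_iff poset_iso_prod_posets_single_iff
  using tree_iso_iff_poset_iso_nap_interval[OF assms] by simp

lemma nap_classes_eq_tree_classes:
  "nap_classes = {iso_class (prod_posets [nap_interval I t]) | I t. is_rooted_tree I t}"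
proof
  show "nap_classes \<subseteq> {iso_class (prod_posets [nap_interval I t]) | I t. is_rooted_tree I t}"
  proof
    fix c assume "c \<in> nap_classes"
    then obtain ts where ts: "\<forall>(I, t) \<in> set ts. is_rooted_tree I t"
      and c: "c = iso_class (prod_posets (map (\<lambda>(I, t). nap_interval I t) ts))"
      unfolding nap_classes_def nap_products_def by blast
    obtain I t where T: "is_rooted_tree I t"
      and iso: "poset_iso (prod_posets (map (\<lambda>(I, t). nap_interval I t) ts)) (nap_interval I t)"
      using prod_posets_nap_interval_iso_tree[OF ts] by blast
    have "c = iso_class (prod_posets [nap_interval I t])"
      unfolding c iso_class_eq_iff
      using poset_iso_trans[OF iso poset_iso_sym[OF poset_iso_prod_posets_single]] .
    then show "c \<in> {iso_class (prod_posets [nap_interval I t]) | I t. is_rooted_tree I t}"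
      using T by blast
  qed
  show "{iso_class (prod_posets [nap_interval I t]) | I t. is_rooted_tree I t} \<subseteq> nap_classes"
    unfolding nap_classes_def nap_products_def
    by (auto intro!: image_eqI exI[of _ "[(I, t)]" for I t])
qed

theorem lemma6p9:
  shows "(\<forall>I t J s. is_rooted_tree I t \<longrightarrow> is_rooted_tree J s \<longrightarrow>
            ((Ftree I t :: forest list poset set \<Rightarrow> 'k::field) = Ftree J s \<longleftrightarrow> tree_iso I t J s))
     \<and> \<not> module.dependent scaleH
           {Ftree I t :: forest list poset set \<Rightarrow> 'k::field | I t. is_rooted_tree I t}
     \<and> module.span scaleH
           {Ftree I t :: forest list poset set \<Rightarrow> 'k::field | I t. is_rooted_tree I t} = H_NAP"
proof -
  have trees: "{Ftree I t :: _ \<Rightarrow> 'k | I t. is_rooted_tree I t} = Fbasis ` nap_classes"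
    unfolding nap_classes_eq_tree_classes Ftree_def by blast
  show ?thesis
    unfolding trees H_NAP_def
    using Ftree_eq_iff_tree_iso independent_Fbasis span_Fbasis by blast
qed

end
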